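(* In the setting described in the context, let $\mathbf{w}:\mathcal{K}(\mathbb{R}^n)\to\mathbb{R}$ be a bounded function satisfying $\mathbf{w}(X)-\mathbf{w}(F(X))=\xi(X)\,(1-\mathbf{w}(F(X)))$ for all $X\in\mathcal{K}(\mathbb{R}^n)$, where $\xi(X):=1-\exp(-\Psi(X))$, and such that $\lim_{k\to\infty}\mathbf{w}(\mathcal{R}(X,k))=0$ for every $X\in\mathcal{K}_{\mathcal{D}_{\mathcal{A}}}(\mathbb{R}^n)$. Then $\mathbf{w}=\mathcal{W}$ on $\mathcal{K}(\mathbb{R}^n)$.
   Context: Let $\|\cdot\|$ be a norm on $\mathbb{R}^n$ and $\mathrm{dist}(x,\Omega):=\inf_{y\in\Omega}\|x-y\|$. Let $\mathcal{K}(\mathbb{R}^n)$ denote the nonempty compact subsets of $\mathbb{R}^n$. Consider $x_{k+1}=f(x_k,u_k)$ with $f:\mathbb{R}^n\times\mathbb{R}^m\to\mathbb{R}^n$ continuous and inputs $u_k\in U$, $U\subset\mathbb{R}^m$ nonempty compact. Define $F(X):=\{f(x,u):x\in X,u\in U\}$. For $x\in\mathbb{R}^n$ and $\pi:\mathbb{Z}_+\to U$, $\varphi_x^\pi(0)=x$, $\varphi_x^\pi(k+1)=f(\varphi_x^\pi(k),\pi(k))$; $\mathcal{R}(X,k):=\{\varphi_x^\pi(k):x\in X,\pi\in U^{\mathbb{Z}_+}\}$. Let $\mathcal{A}\in\mathcal{K}(\mathbb{R}^n)$ be controlled invariant. Assume local $\ell_p$-stabilizability: there exist $r>0$, $M\ge1$,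 $p>0$, $\lambda:[0,r]\times\mathbb{Z}_+\to\mathbb{R}_+$ such that (1) for each $k$, $s\mapsto\lambda(s,k)$ is continuous, nondecreasing, $\lambda(0,k)=0$; for each $s$, $k\mapsto\lambda(s,k)$ is nonincreasing, $\lambda(s,0)\le s$; (2) $\sum_{k}\lambda(r,k)^p<\infty$; (3) for every $x$ with $\mathrm{dist}(x,\mathcal{A})\le r$ there is $\pi\in U^{\mathbb{Z}_+}$ with $\mathrm{dist}(\varphi_x^\pi(k),\mathcal{A})\le M\lambda(\mathrm{dist}(x,\mathcal{A}),k)$ for all $k$. Let $\mathcal{D}_{\mathcal{A}}:=\{x:\exists\pi\in U^{\mathbb{Z}_+},\ \lim_{k\to\infty}\mathrm{dist}(\varphi_x^\pi(k),\mathcal{A})=0\}$ and $\mathcal{K}_{\mathcal{D}_{\mathcal{A}}}(\mathbb{R}^n):=\{X\in\mathcal{K}(\mathbb{R}^n):X\cap\mathcal{D}_{\mathcal{A}}\neq\emptyset\}$. Let $\alpha:\mathbb{R}^n\to\mathbb{R}_+$ be continuous with $\underline{\alpha}\,\mathrm{dist}(x,\mathcal{A})^{\bar p}\le\alpha(x)\le\overline{\alpha}\,\mathrm{dist}(x,\mathcal{A})^{\bar p}$, constants $\underline{\alpha},\overline{\alpha}>0$, $\bar p\ge p$. Define $\Psi(X):=\inf_{y\in X}\alpha(y)$, $\mathcal{V}(X):=\sum_{k=0}^\infty\Psi(\mathcal{R}(X,k))\in[0,\infty]$, and $\mathcal{W}(X):=1-\exp(-\mathcal{V}(X))$ with the convention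 $\exp(-\infty)=0$. *)

theory Defs
  imports "HOL-Analysis.Analysis"
begin

text \<open>A general norm on the state space (the paper allows an arbitrary norm on R^n).\<close>
definition is_norm :: "(real^'n \<Rightarrow> real) \<Rightarrow> bool" where
  "is_norm N \<longleftrightarrow> (\<forall>x. N x = 0 \<longleftrightarrow> x = 0) \<and> (\<forall>x y. N (x + y) \<le> N x + N y)
     \<and> (\<forall>c x. N (c *\<^sub>R x) = \<bar>c\<bar> * N x)"

definition distN :: "(real^'n \<Rightarrow> real) \<Rightarrow> real^'n \<Rightarrow> (real^'n) set \<Rightarrow> real" where
  "distN N x \<Omega> = (INF y\<in>\<Omega>. N (x - y))"

definition Kset :: "'a::topological_space set set" where
  "Kset = {X. compact X \<and> X \<noteq> {}}"

definition Fmap :: "('a \<times> 'b \<Rightarrow> 'a) \<Rightarrow> 'b set \<Rightarrow> 'a set \<Rightarrow> 'a set" where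
  "Fmap f U X = {f (x, u) | x u. x \<in> X \<and> u \<in> U}"

primrec traj :: "('a \<times> 'b \<Rightarrow> 'a) \<Rightarrow> 'a \<Rightarrow> (nat \<Rightarrow> 'b) \<Rightarrow> nat \<Rightarrow> 'a" where
  "traj f x \<pi> 0 = x"
| "traj f x \<pi> (Suc k) = f (traj f x \<pi> k, \<pi> k)"

definition Reach :: "('a \<times> 'b \<Rightarrow> 'a) \<Rightarrow> 'b set \<Rightarrow> 'a set \<Rightarrow> nat \<Rightarrow> 'a set" where
  "Reach f U X k = {traj f x \<pi> k | x \<pi>. x \<in> X \<and> (\<forall>i. \<pi> i \<in> U)}"

definition controlled_invariant :: "('a \<times> 'b \<Rightarrow> 'a) \<Rightarrow> 'b set \<Rightarrow> 'a set \<Rightarrow> bool" where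
  "controlled_invariant f U A \<longleftrightarrow> (\<forall>x\<in>A. \<exists>u\<in>U. f (x, u) \<in> A)"

definition local_lp_stabilizable ::
  "(real^'n \<Rightarrow> real) \<Rightarrow> ((real^'n) \<times> 'b \<Rightarrow> real^'n) \<Rightarrow> 'b set \<Rightarrow> (real^'n) set
   \<Rightarrow> real \<Rightarrow> real \<Rightarrow> real \<Rightarrow> (real \<Rightarrow> nat \<Rightarrow> real) \<Rightarrow> bool" where
  "local_lp_stabilizable N f U A r M p lam \<longleftrightarrow>
     r > 0 \<and> M \<ge> 1 \<and> p > 0 \<and>
     (\<forall>s\<in>{0..r}. \<forall>k. lam s k \<ge> 0) \<and>
     (\<forall>k. continuous_on {0..r} (\<lambda>s. lam s k) \<and> mono_on {0..r} (\<lambda>s. lam s k) \<and> lam 0 k = 0) \<and>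
     (\<forall>s\<in>{0..r}. antimono (\<lambda>k. lam s k) \<and> lam s 0 \<le> s) \<and>
     summable (\<lambda>k. lam r k powr p) \<and>
     (\<forall>x. distN N x A \<le> r \<longrightarrow>
        (\<exists>\<pi>. (\<forall>i. \<pi> i \<in> U) \<and> (\<forall>k. distN N (traj f x \<pi> k) A \<le> M * lam (distN N x A) k)))"

definition DomA ::
  "(real^'n \<Rightarrow> real) \<Rightarrow> ((real^'n) \<times> 'b \<Rightarrow> real^'n) \<Rightarrow> 'b set \<Rightarrow> (real^'n) set \<Rightarrow> (real^'n) set" where
  "DomA N f U A = {x. \<exists>\<pi>. (\<forall>i. \<pi> i \<in> U) \<and> (\<lambda>k. distN N (traj f x \<pi> k) A) \<longlonglongrightarrow> 0}"

definition Psi :: "('a \<Rightarrow> real) \<Rightarrow> 'a set \<Rightarrow> real" where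
  "Psi \<alpha> X = (INF y\<in>X. \<alpha> y)"

text \<open>V takes values in [0, infinity]; W(X) = 1 - exp(-V(X)) with exp(-infinity) = 0.\<close>
definition Vfun :: "('a \<times> 'b \<Rightarrow> 'a) \<Rightarrow> 'b set \<Rightarrow> ('a \<Rightarrow> real) \<Rightarrow> 'a set \<Rightarrow> ennreal" where
  "Vfun f U \<alpha> X = (\<Sum>k. ennreal (Psi \<alpha> (Reach f U X k)))"

definition Wfun :: "('a \<times> 'b \<Rightarrow> 'a) \<Rightarrow> 'b set \<Rightarrow> ('a \<Rightarrow> real) \<Rightarrow> 'a set \<Rightarrow> real" where
  "Wfun f U \<alpha> X = (if Vfun f U \<alpha> X = \<infinity> then 1 else 1 - exp (- enn2real (Vfun f U \<alpha> X)))"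

end

theory Submission
  imports Defs
begin

text \<open>
  Writing \<open>S\<^sub>k\<close> for the partial sums of \<open>\<Psi>(\<R>(X,j))\<close>, the functional equation iterates to
  \<open>1 - w X = exp(-S\<^sub>k) (1 - w(\<R>(X,k)))\<close>. If the series diverges, boundedness of \<open>w\<close> forces
  \<open>w X = 1 = \<W>(X)\<close>. If it converges, \<open>\<Psi>(\<R>(X,k)) \<rightarrow> 0\<close>, so some reachable point has small
  \<open>\<alpha>\<close>, hence lies within distance \<open>r\<close> of \<open>\<A>\<close>; stabilizability steers it to \<open>\<A>\<close>, so \<open>X\<close> meets
  \<open>\<D>\<^sub>\<A>\<close>, \<open>w(\<R>(X,k)) \<rightarrow> 0\<close>, and the limit gives \<open>1 - w X = exp(-\<V>(X))\<close>.
\<close>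

lemma traj_cong: "(\<And>i. i < k \<Longrightarrow> \<pi> i = \<pi>' i) \<Longrightarrow> traj f x \<pi> k = traj f x \<pi>' k"
  by (induction k) auto

lemma traj_append:
  "traj f x (\<lambda>i. if i < k then \<pi>0 i else \<pi> (i - k)) (j + k) = traj f (traj f x \<pi>0 k) \<pi> j"
  by (induction j) (auto intro: traj_cong)

lemma Reach_0: "U \<noteq> {} \<Longrightarrow> Reach f U X 0 = X"
  unfolding Reach_def by (auto intro!: exI[of _ "\<lambda>_. SOME u. u \<in> U"] some_in_eq[THEN iffD2])

lemma Reach_Suc: "Reach f U X (Suc k) = Fmap f U (Reach f U X k)"
proof
  show "Reach f U X (Suc k) \<subseteq> Fmap f U (Reach f U X k)"
    unfolding Reach_def Fmap_def by auto
next
  show "Fmap f U (Reach f U X k) \<subseteq> Reach f U X (Suc k)"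
  proof
    fix z assume "z \<in> Fmap f U (Reach f U X k)"
    then obtain x \<pi> u where z: "z = f (traj f x \<pi> k, u)" "x \<in> X" "\<forall>i. \<pi> i \<in> U" "u \<in> U"
      unfolding Reach_def Fmap_def by blast
    have "traj f x (\<pi>(k := u)) k = traj f x \<pi> k" by (rule traj_cong) auto
    then have "z = traj f x (\<pi>(k := u)) (Suc k)" using z by simp
    moreover have "\<forall>i. (\<pi>(k := u)) i \<in> U" using z by auto
    ultimately show "z \<in> Reach f U X (Suc k)" unfolding Reach_def using z by blast
  qed
qed

lemma Fmap_Kset:
  assumes "continuous_on UNIV f" "compact U" "U \<noteq> {}" "X \<in> Kset"
  shows "Fmap f U X \<in> Kset"
proof -
  have "Fmap f U X = f ` (X \<times> U)" unfolding Fmap_def by auto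
  moreover have "compact (X \<times> U)" "X \<times> U \<noteq> {}"
    using assms unfolding Kset_def by (auto intro: compact_Times)
  ultimately show ?thesis
    using assms(1) unfolding Kset_def by (auto intro: compact_continuous_image continuous_on_subset)
qed

lemma Reach_Kset:
  assumes "continuous_on UNIV f" "compact U" "U \<noteq> {}" "X \<in> Kset"
  shows "Reach f U X k \<in> Kset"
  using assms by (induction k) (simp_all add: Reach_0 Reach_Suc Fmap_Kset)

lemma is_norm_nonneg:
  assumes "is_norm N" shows "N x \<ge> 0"
proof -
  have "N (x + (-1) *\<^sub>R x) \<le> N x + N ((-1) *\<^sub>R x)" "N ((-1) *\<^sub>R x) = \<bar>-1\<bar> * N x" "N 0 = 0"
    using assms unfolding is_norm_def by blast+
  then show ?thesis by simp
qed

lemma distN_nonneg: "is_norm N \<Longrightarrow> A \<noteq> {} \<Longrightarrow> distN N x A \<ge> 0"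
  unfolding distN_def by (intro cINF_greatest) (auto simp: is_norm_nonneg)

lemma Psi_nonneg: "(\<And>x. \<alpha> x \<ge> 0) \<Longrightarrow> X \<noteq> {} \<Longrightarrow> Psi \<alpha> X \<ge> 0"
  unfolding Psi_def by (intro cINF_greatest) auto

lemma Wfun_eq:
  assumes "\<And>k. Psi \<alpha> (Reach f U X k) \<ge> 0"
  shows "Wfun f U \<alpha> X = (if summable (\<lambda>k. Psi \<alpha> (Reach f U X k))
                          then 1 - exp (- (\<Sum>k. Psi \<alpha> (Reach f U X k))) else 1)"
proof (cases "summable (\<lambda>k. Psi \<alpha> (Reach f U X k))")
  case True
  have "Vfun f U \<alpha> X = ennreal (\<Sum>k. Psi \<alpha> (Reach f U X k))"
    unfolding Vfun_def by (rule suminf_ennreal2[OF assms True])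
  with True show ?thesis using suminf_nonneg[OF True assms] by (simp add: Wfun_def)
next
  case False
  then have "Vfun f U \<alpha> X = \<infinity>"
    using summable_suminf_not_top[of "\<lambda>k. Psi \<alpha> (Reach f U X k)", OF assms]
    unfolding Vfun_def infinity_ennreal_def by blast
  with False show ?thesis by (simp add: Wfun_def)
qed

lemma functional_equation_iterate:
  assumes "continuous_on UNIV f" "compact U" "U \<noteq> {}" "X \<in> Kset"
    and w_eq: "\<And>Y. Y \<in> Kset \<Longrightarrow>
      w Y - w (Fmap f U Y) = (1 - exp (- Psi \<alpha> Y)) * (1 - w (Fmap f U Y))"
  shows "1 - w X = exp (- (\<Sum>j<k. Psi \<alpha> (Reach f U X j))) * (1 - w (Reach f U X k))"
proof (induction k)
  case 0
  show ?case by (simp add: Reach_0[OF assms(3)])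
next
  case (Suc k)
  have "1 - w (Reach f U X k) = exp (- Psi \<alpha> (Reach f U X k)) * (1 - w (Reach f U X (Suc k)))"
    using w_eq[OF Reach_Kset[OF assms(1-4)]] unfolding Reach_Suc by (simp add: algebra_simps)
  with Suc show ?case by (simp add: exp_diff exp_minus field_simps)
qed

lemma not_summable_exp_factor_eq_0:
  fixes a b :: "nat \<Rightarrow> real"
  assumes "\<not> summable a" "\<And>k. a k \<ge> 0"
    and "\<And>k. c = exp (- (\<Sum>j<k. a j)) * b k" "\<And>k. \<bar>b k\<bar> \<le> B"
  shows "c = 0"
proof (rule ccontr)
  assume "c \<noteq> 0"
  have "(\<Sum>j<k. a j) \<le> ln (B / \<bar>c\<bar>)" for k
  proof -
    have "\<bar>c\<bar> \<le> exp (- (\<Sum>j<k. a j)) * B"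
      using assms(3,4)[of k] by (simp add: abs_mult mult_left_mono)
    then have "exp (\<Sum>j<k. a j) \<le> B / \<bar>c\<bar>"
      using \<open>c \<noteq> 0\<close> by (simp add: exp_minus field_simps)
    then show ?thesis by (subst ln_ge_iff) (auto intro: less_le_trans[OF exp_gt_zero])
  qed
  then have "summable a" using assms(2) by (intro summableI_nonneg_bounded) auto
  with assms(1) show False ..
qed

lemma summable_exp_factor_limit:
  fixes a b :: "nat \<Rightarrow> real"
  assumes "summable a" "\<And>k. c = exp (- (\<Sum>j<k. a j)) * b k" "b \<longlonglongrightarrow> L"
  shows "c = exp (- suminf a) * L"
proof -
  have "(\<lambda>k. exp (- (\<Sum>j<k. a j)) * b k) \<longlonglongrightarrow> exp (- suminf a) * L"
    using summable_LIMSEQ[OF assms(1)] assms(3) by (intro tendsto_intros)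
  then show ?thesis by (simp add: assms(2)[symmetric] LIMSEQ_const_iff)
qed

lemma local_lp_stabilizable_lam_tendsto_0:
  assumes "local_lp_stabilizable N f U A r M p lam"
  shows "(\<lambda>k. lam r k) \<longlonglongrightarrow> 0"
proof -
  from assms have p: "p > 0" and lam_nonneg: "\<And>k. lam r k \<ge> 0"
    and "summable (\<lambda>k. lam r k powr p)"
    unfolding local_lp_stabilizable_def by auto
  then have "(\<lambda>k. (lam r k powr p) powr (1 / p)) \<longlonglongrightarrow> 0"
    by (intro tendsto_zero_powrI[where b = "1 / p", OF summable_LIMSEQ_zero]) auto
  moreover have "(lam r k powr p) powr (1 / p) = lam r k" for k
    using p lam_nonneg[of k] by (simp add: powr_powr)
  ultimately show ?thesis by simp
qed

lemma local_lp_stabilizable_DomA: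
  assumes stab: "local_lp_stabilizable N f U A r M p lam"
    and "is_norm N" "A \<noteq> {}" "distN N y A \<le> r"
  shows "y \<in> DomA N f U A"
proof -
  define d where "d = distN N y A"
  have d: "0 \<le> d" "d \<le> r" using assms distN_nonneg unfolding d_def by auto
  from stab have "M \<ge> 1" and lam_mono: "mono_on {0..r} (\<lambda>s. lam s k)" for k
    unfolding local_lp_stabilizable_def by auto
  from stab assms(4) obtain \<pi> where \<pi>: "\<forall>i. \<pi> i \<in> U"
    and bound: "\<And>k. distN N (traj f y \<pi> k) A \<le> M * lam d k"
    unfolding local_lp_stabilizable_def d_def by blast
  have "(\<lambda>k. distN N (traj f y \<pi> k) A) \<longlonglongrightarrow> 0"
  proof (rule Lim_null_comparison)
    have "distN N (traj f y \<pi> k) A \<le> M * lam r k" for k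
    proof -
      have "lam d k \<le> lam r k" using mono_onD[OF lam_mono, of d r] d by simp
      with \<open>M \<ge> 1\<close> show ?thesis by (intro order_trans[OF bound[of k]] mult_left_mono) auto
    qed
    then show "\<forall>\<^sub>F k in sequentially. norm (distN N (traj f y \<pi> k) A) \<le> M * lam r k"
      by (intro always_eventually allI) (simp add: distN_nonneg[OF assms(2,3)])
    show "(\<lambda>k. M * lam r k) \<longlonglongrightarrow> 0"
      using local_lp_stabilizable_lam_tendsto_0[OF stab] by (rule tendsto_mult_right_zero)
  qed
  with \<pi> show ?thesis unfolding DomA_def by blast
qed

lemma DomA_if_traj_DomA:
  assumes "traj f x \<pi>0 k \<in> DomA N f U A" "\<forall>i. \<pi>0 i \<in> U"
  shows "x \<in> DomA N f U A"
proof -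
  from assms(1) obtain \<pi> where \<pi>: "\<forall>i. \<pi> i \<in> U"
    and lim: "(\<lambda>j. distN N (traj f (traj f x \<pi>0 k) \<pi> j) A) \<longlonglongrightarrow> 0"
    unfolding DomA_def by blast
  define \<pi>' where "\<pi>' i = (if i < k then \<pi>0 i else \<pi> (i - k))" for i
  have "(\<lambda>j. distN N (traj f x \<pi>' (j + k)) A) \<longlonglongrightarrow> 0"
    using lim unfolding \<pi>'_def traj_append .
  then have "(\<lambda>j. distN N (traj f x \<pi>' j) A) \<longlonglongrightarrow> 0" by (rule LIMSEQ_offset)
  moreover have "\<forall>i. \<pi>' i \<in> U" using assms(2) \<pi> unfolding \<pi>'_def by simp
  ultimately show ?thesis unfolding DomA_def by blast
qed

lemma Psi_less_obtains_near:
  assumes "Psi \<alpha> Y < alo * r powr pbar" "Y \<noteq> {}" "\<And>x. \<alpha> x \<ge> 0"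
    and "\<And>x. alo * distN N x A powr pbar \<le> \<alpha> x" "alo > 0" "r > 0" "pbar \<ge> 0"
  obtains y where "y \<in> Y" "distN N y A \<le> r"
proof -
  have "bdd_below (\<alpha> ` Y)" using assms(3) by (intro bdd_belowI[of _ 0]) auto
  with assms(1,2) obtain y where y: "y \<in> Y" "\<alpha> y < alo * r powr pbar"
    unfolding Psi_def by (subst (asm) cINF_less_iff) auto
  have "distN N y A \<le> r"
  proof (rule ccontr)
    assume "\<not> distN N y A \<le> r"
    then have "alo * r powr pbar \<le> alo * distN N y A powr pbar"
      using assms(5-7) by (intro mult_left_mono powr_mono2) auto
    with y(2) assms(4)[of y] show False by simp
  qed
  with y(1) show thesis by (rule that)
qed

lemma summable_Psi_Reach_meets_DomA:
  assumes "is_norm N" "continuous_on UNIV f" "compact U" "U \<noteq> {}" "A \<noteq> {}"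
    and stab: "local_lp_stabilizable N f U A r M p lam"
    and "\<And>x. \<alpha> x \<ge> 0" "\<And>x. alo * distN N x A powr pbar \<le> \<alpha> x" "alo > 0" "pbar \<ge> 0"
    and X: "X \<in> Kset" and summable: "summable (\<lambda>k. Psi \<alpha> (Reach f U X k))"
  shows "X \<inter> DomA N f U A \<noteq> {}"
proof -
  have "r > 0" using stab unfolding local_lp_stabilizable_def by simp
  then have "alo * r powr pbar > 0" using assms(9) by simp
  moreover have "(\<lambda>k. Psi \<alpha> (Reach f U X k)) \<longlonglongrightarrow> 0"
    using summable by (rule summable_LIMSEQ_zero)
  ultimately have "\<forall>\<^sub>F k in sequentially. Psi \<alpha> (Reach f U X k) < alo * r powr pbar"
    by (rule order_tendstoD(2)[rotated])
  then obtain k where "Psi \<alpha> (Reach f U X k) < alo * r powr pbar"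
    unfolding eventually_sequentially by blast
  moreover have "Reach f U X k \<noteq> {}"
    using Reach_Kset[OF assms(2-4) X] unfolding Kset_def by blast
  ultimately obtain y where "y \<in> Reach f U X k" "distN N y A \<le> r"
    using Psi_less_obtains_near[OF _ _ assms(7,8,9) \<open>r > 0\<close> assms(10)] by blast
  then obtain x \<pi>0 where "x \<in> X" "\<forall>i. \<pi>0 i \<in> U" "traj f x \<pi>0 k \<in> DomA N f U A"
    using local_lp_stabilizable_DomA[OF stab assms(1,5)] unfolding Reach_def by blast
  then show ?thesis using DomA_if_traj_DomA by blast
qed

theorem theorem14:
  fixes N :: "real^'n \<Rightarrow> real"
    and f :: "(real^'n) \<times> (real^'m) \<Rightarrow> real^'n"
    and U :: "(real^'m) set"
    and A :: "(real^'n) set"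
    and r M p :: real and lam :: "real \<Rightarrow> nat \<Rightarrow> real"
    and \<alpha> :: "real^'n \<Rightarrow> real"
    and alo ahi pbar :: real
    and w :: "(real^'n) set \<Rightarrow> real"
  assumes norm: "is_norm N"
    and f_cont: "continuous_on UNIV f"
    and U: "compact U" "U \<noteq> {}"
    and A: "compact A" "A \<noteq> {}" "controlled_invariant f U A"
    and stab: "local_lp_stabilizable N f U A r M p lam"
    and alpha_cont: "continuous_on UNIV \<alpha>"
    and alpha_nonneg: "\<forall>x. \<alpha> x \<ge> 0"
    and alpha_consts: "alo > 0" "ahi > 0" "pbar \<ge> p"
    and alpha_bounds: "\<forall>x. alo * distN N x A powr pbar \<le> \<alpha> x \<and> \<alpha> x \<le> ahi * distN N x A powr pbar"
    and w_bounded: "\<exists>B. \<forall>X\<in>Kset. \<bar>w X\<bar> \<le> B"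
    and w_eq: "\<forall>X\<in>Kset. w X - w (Fmap f U X) = (1 - exp (- Psi \<alpha> X)) * (1 - w (Fmap f U X))"
    and w_lim: "\<forall>X\<in>Kset. X \<inter> DomA N f U A \<noteq> {} \<longrightarrow> (\<lambda>k. w (Reach f U X k)) \<longlonglongrightarrow> 0"
  shows "\<forall>X\<in>Kset. w X = Wfun f U \<alpha> X"
proof
  fix X :: "(real^'n) set" assume X: "X \<in> Kset"
  define a where "a k = Psi \<alpha> (Reach f U X k)" for k
  have a_nonneg: "a k \<ge> 0" for k
    using Psi_nonneg alpha_nonneg Reach_Kset[OF f_cont U X] unfolding a_def Kset_def by blast
  have iterate: "1 - w X = exp (- (\<Sum>j<k. a j)) * (1 - w (Reach f U X k))" for k
    unfolding a_def by (rule functional_equation_iterate[OF f_cont U X w_eq[rule_format]])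
  show "w X = Wfun f U \<alpha> X"
  proof (cases "summable a")
    case True
    have "pbar \<ge> 0" using stab alpha_consts(3) unfolding local_lp_stabilizable_def by simp
    then have "X \<inter> DomA N f U A \<noteq> {}"
      using summable_Psi_Reach_meets_DomA[OF norm f_cont U A(2) stab] alpha_nonneg alpha_bounds
        alpha_consts(1) X True
      unfolding a_def by blast
    then have "(\<lambda>k. 1 - w (Reach f U X k)) \<longlonglongrightarrow> 1 - 0"
      using w_lim X by (intro tendsto_intros) blast
    then have "1 - w X = exp (- suminf a) * (1 - 0)"
      using summable_exp_factor_limit[OF True iterate] by blast
    with True show ?thesis using Wfun_eq[OF a_nonneg[unfolded a_def]] unfolding a_def by simp
  next
    case False
    obtain B where "\<forall>Y\<in>Kset. \<bar>w Y\<bar> \<le> B" using w_bounded by blast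
    then have "\<bar>1 - w (Reach f U X k)\<bar> \<le> 1 + B" for k
      using Reach_Kset[OF f_cont U X, of k] abs_triangle_ineq4[of 1 "w (Reach f U X k)"] by fastforce
    then have "1 - w X = 0"
      using not_summable_exp_factor_eq_0[OF False a_nonneg iterate] by blast
    with False show ?thesis using Wfun_eq[OF a_nonneg[unfolded a_def]] unfolding a_def by simp
  qed
qed

end
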